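(* Let $\sigma(x,y)=(x\rightharpoonup y,x\leftharpoonup y)$ be an involutive non-degenerate quiver-theoretic Yang--Baxter map on a quiver $\mathscr{A}$ over $\Lambda$. Define $x\star y:=(x\rightharpoonup\cdot)^{-1}(y)$ for $\mathfrak{s}(x)=\mathfrak{s}(y)$, $x\bullet y:=(\cdot\leftharpoonup x)^{-1}(y)$ for $\mathfrak{t}(x)=\mathfrak{t}(y)$, and $x\,\tilde\star\,y:=y\bullet x$. Then $(\mathscr{A},\star,\tilde\star)$ is a weak RLC-system.
   Context: A quiver-theoretic Yang--Baxter map is a source/target-preserving map $\sigma$ on composable pairs $\mathscr{A}\otimes\mathscr{A}$ satisfying the braid relation; involutive: $\sigma^2=\mathrm{id}$; non-degenerate: all maps $x\rightharpoonup\cdot\colon\mathscr{A}(\mathfrak{t}(x),\Lambda)\to\mathscr{A}(\mathfrak{s}(x),\Lambda)$ and $\cdot\leftharpoonup y\colon\mathscr{A}(\Lambda,\mathfrak{s}(y))\to\mathscr{A}(\Lambda,\mathfrak{t}(y))$ are bijective. A weak RC-system $(Q,\star)$: partial operation with $x\star y$ defined only if $\mathfrak{s}(x)=\mathfrak{s}(y)$; if $x\star y$ is defined so is $y\star x$, with $\mathfrak{s}(x\star y)=\mathfrak{t}(x)$, $\mathfrak{s}(y\star x)=\mathfrak{t}(y)$, $\mathfrak{t}(x\star y)=\mathfrak{t}(y\star x)$; and if $x\star y$, $x\star z$, $(x\star y)\star(x\star z)$ are defined then $y\star z$, $(y\star x)\star(y\star z)$ are defined and $(x\star y)\star(x\star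 z)=(y\star x)\star(y\star z)$. A weak co-RC-system $(Q,\bullet)$: $x\bullet y$ defined only if $\mathfrak{t}(x)=\mathfrak{t}(y)$; if defined, $y\bullet x$ is defined with $\mathfrak{t}(x\bullet y)=\mathfrak{s}(x)$, $\mathfrak{t}(y\bullet x)=\mathfrak{s}(y)$, $\mathfrak{s}(x\bullet y)=\mathfrak{s}(y\bullet x)$; and the same law $(x\bullet y)\bullet(x\bullet z)=(y\bullet x)\bullet(y\bullet z)$ with the same definedness clause. A weak LC-system $(Q,\tilde\star)$ is one such that $x\bullet y:=y\,\tilde\star\,x$ makes $(Q,\bullet)$ a weak co-RC-system. A weak RLC-system $(Q,\star,\tilde\star)$ is such that $(Q,\star)$ is a weak RC-system, $(Q,\tilde\star)$ a weak LC-system, and: if $x\star y$ is defined then $(y\star x)\,\tilde\star\,(x\star y)$ is defined and equals $x$; if $x\,\tilde\star\,y$ is defined then $(y\,\tilde\star\,x)\star(x\,\tilde\star\,y)$ is defined and equals $x$. *)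

theory Defs
  imports Main
begin

text \<open>A quiver: a set of arrows A with source map s and target map t into the
vertex type 'v (playing the role of \<Lambda>).  A map sigma on composable pairs is given by its two components
lact x y = x \<rightharpoonup> y and ract x y = x \<leftharpoonup> y.  Partial binary operations are
modelled as functions into option: op x y = None means "undefined".\<close>

definition YB_sigma :: "('a \<Rightarrow> 'a \<Rightarrow> 'a) \<Rightarrow> ('a \<Rightarrow> 'a \<Rightarrow> 'a) \<Rightarrow> 'a \<times> 'a \<Rightarrow> 'a \<times> 'a" where
  "YB_sigma lact ract p = (lact (fst p) (snd p), ract (fst p) (snd p))"

definition sig12 :: "('a \<times> 'a \<Rightarrow> 'a \<times> 'a) \<Rightarrow> 'a \<times> 'a \<times> 'a \<Rightarrow> 'a \<times> 'a \<times> 'a" where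
  "sig12 f q = (case q of (x, y, z) \<Rightarrow> (case f (x, y) of (a, b) \<Rightarrow> (a, b, z)))"

definition sig23 :: "('a \<times> 'a \<Rightarrow> 'a \<times> 'a) \<Rightarrow> 'a \<times> 'a \<times> 'a \<Rightarrow> 'a \<times> 'a \<times> 'a" where
  "sig23 f q = (case q of (x, y, z) \<Rightarrow> (case f (y, z) of (b, c) \<Rightarrow> (x, b, c)))"

definition quiver_YB_map ::
  "'a set \<Rightarrow> ('a \<Rightarrow> 'v) \<Rightarrow> ('a \<Rightarrow> 'v) \<Rightarrow> ('a \<Rightarrow> 'a \<Rightarrow> 'a) \<Rightarrow> ('a \<Rightarrow> 'a \<Rightarrow> 'a) \<Rightarrow> bool" where
  "quiver_YB_map A s t lact ract \<longleftrightarrow>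
     (\<forall>x\<in>A. \<forall>y\<in>A. t x = s y \<longrightarrow>
        lact x y \<in> A \<and> ract x y \<in> A \<and>
        s (lact x y) = s x \<and> t (lact x y) = s (ract x y) \<and> t (ract x y) = t y) \<and>
     (\<forall>x\<in>A. \<forall>y\<in>A. \<forall>z\<in>A. t x = s y \<longrightarrow> t y = s z \<longrightarrow>
        sig12 (YB_sigma lact ract) (sig23 (YB_sigma lact ract) (sig12 (YB_sigma lact ract) (x, y, z)))
      = sig23 (YB_sigma lact ract) (sig12 (YB_sigma lact ract) (sig23 (YB_sigma lact ract) (x, y, z))))"

definition YB_involutive ::
  "'a set \<Rightarrow> ('a \<Rightarrow> 'v) \<Rightarrow> ('a \<Rightarrow> 'v) \<Rightarrow> ('a \<Rightarrow> 'a \<Rightarrow> 'a) \<Rightarrow> ('a \<Rightarrow> 'a \<Rightarrow> 'a) \<Rightarrow> bool" where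
  "YB_involutive A s t lact ract \<longleftrightarrow>
     (\<forall>x\<in>A. \<forall>y\<in>A. t x = s y \<longrightarrow>
        YB_sigma lact ract (YB_sigma lact ract (x, y)) = (x, y))"

definition YB_nondegenerate ::
  "'a set \<Rightarrow> ('a \<Rightarrow> 'v) \<Rightarrow> ('a \<Rightarrow> 'v) \<Rightarrow> ('a \<Rightarrow> 'a \<Rightarrow> 'a) \<Rightarrow> ('a \<Rightarrow> 'a \<Rightarrow> 'a) \<Rightarrow> bool" where
  "YB_nondegenerate A s t lact ract \<longleftrightarrow>
     (\<forall>x\<in>A. bij_betw (lact x) {y\<in>A. s y = t x} {y\<in>A. s y = s x}) \<and>
     (\<forall>y\<in>A. bij_betw (\<lambda>x. ract x y) {x\<in>A. t x = s y} {x\<in>A. t x = t y})"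

definition YB_star ::
  "'a set \<Rightarrow> ('a \<Rightarrow> 'v) \<Rightarrow> ('a \<Rightarrow> 'v) \<Rightarrow> ('a \<Rightarrow> 'a \<Rightarrow> 'a) \<Rightarrow> 'a \<Rightarrow> 'a \<Rightarrow> 'a option" where
  "YB_star A s t lact x y =
     (if x \<in> A \<and> y \<in> A \<and> s x = s y
      then Some (the_inv_into {z\<in>A. s z = t x} (lact x) y) else None)"

definition YB_bullet ::
  "'a set \<Rightarrow> ('a \<Rightarrow> 'v) \<Rightarrow> ('a \<Rightarrow> 'v) \<Rightarrow> ('a \<Rightarrow> 'a \<Rightarrow> 'a) \<Rightarrow> 'a \<Rightarrow> 'a \<Rightarrow> 'a option" where
  "YB_bullet A s t ract x y =
     (if x \<in> A \<and> y \<in> A \<and> t x = t y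
      then Some (the_inv_into {z\<in>A. t z = s x} (\<lambda>z. ract z x) y) else None)"

definition YB_tstar ::
  "'a set \<Rightarrow> ('a \<Rightarrow> 'v) \<Rightarrow> ('a \<Rightarrow> 'v) \<Rightarrow> ('a \<Rightarrow> 'a \<Rightarrow> 'a) \<Rightarrow> 'a \<Rightarrow> 'a \<Rightarrow> 'a option" where
  "YB_tstar A s t ract x y = YB_bullet A s t ract y x"

definition weak_RC_system ::
  "'a set \<Rightarrow> ('a \<Rightarrow> 'v) \<Rightarrow> ('a \<Rightarrow> 'v) \<Rightarrow> ('a \<Rightarrow> 'a \<Rightarrow> 'a option) \<Rightarrow> bool" where
  "weak_RC_system Q s t op \<longleftrightarrow>
     (\<forall>x y u. op x y = Some u \<longrightarrow> x \<in> Q \<and> y \<in> Q \<and> u \<in> Q \<and> s x = s y) \<and>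
     (\<forall>x y u. op x y = Some u \<longrightarrow>
        (\<exists>v. op y x = Some v \<and> s u = t x \<and> s v = t y \<and> t u = t v)) \<and>
     (\<forall>x y z a b c. op x y = Some a \<longrightarrow> op x z = Some b \<longrightarrow> op a b = Some c \<longrightarrow>
        (\<exists>d e. op y z = Some e \<and> op y x = Some d \<and> op d e = Some c))"

definition weak_coRC_system ::
  "'a set \<Rightarrow> ('a \<Rightarrow> 'v) \<Rightarrow> ('a \<Rightarrow> 'v) \<Rightarrow> ('a \<Rightarrow> 'a \<Rightarrow> 'a option) \<Rightarrow> bool" where
  "weak_coRC_system Q s t op \<longleftrightarrow>
     (\<forall>x y u. op x y = Some u \<longrightarrow> x \<in> Q \<and> y \<in> Q \<and> u \<in> Q \<and> t x = t y) \<and>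
     (\<forall>x y u. op x y = Some u \<longrightarrow>
        (\<exists>v. op y x = Some v \<and> t u = s x \<and> t v = s y \<and> s u = s v)) \<and>
     (\<forall>x y z a b c. op x y = Some a \<longrightarrow> op x z = Some b \<longrightarrow> op a b = Some c \<longrightarrow>
        (\<exists>d e. op y z = Some e \<and> op y x = Some d \<and> op d e = Some c))"

definition weak_LC_system ::
  "'a set \<Rightarrow> ('a \<Rightarrow> 'v) \<Rightarrow> ('a \<Rightarrow> 'v) \<Rightarrow> ('a \<Rightarrow> 'a \<Rightarrow> 'a option) \<Rightarrow> bool" where
  "weak_LC_system Q s t op \<longleftrightarrow> weak_coRC_system Q s t (\<lambda>x y. op y x)"

definition weak_RLC_system ::
  "'a set \<Rightarrow> ('a \<Rightarrow> 'v) \<Rightarrow> ('a \<Rightarrow> 'v) \<Rightarrow> ('a \<Rightarrow> 'a \<Rightarrow> 'a option) \<Rightarrow> ('a \<Rightarrow> 'a \<Rightarrow> 'a option) \<Rightarrow> bool" where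
  "weak_RLC_system Q s t star tstar \<longleftrightarrow>
     weak_RC_system Q s t star \<and> weak_LC_system Q s t tstar \<and>
     (\<forall>x y u. star x y = Some u \<longrightarrow>
        (\<exists>v. star y x = Some v \<and> tstar v u = Some x)) \<and>
     (\<forall>x y u. tstar x y = Some u \<longrightarrow>
        (\<exists>v. tstar y x = Some v \<and> star v u = Some x))"

end

theory Submission
  imports Defs
begin

text \<open>By non-degeneracy, \<open>x \<star> y\<close> is the unique \<open>u\<close> with \<open>\<sigma>(x, u) = (y, _)\<close>, and
\<open>x \<bullet> y\<close> the unique \<open>c\<close> with \<open>\<sigma>(c, x) = (_, y)\<close>. Involutivity turns
\<open>\<sigma>(x, u) = (y, v)\<close> into \<open>\<sigma>(y, v) = (x, u)\<close>, which yields both \<open>y \<star> x = v\<close> and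
\<open>u \<bullet> v = x\<close>: this gives the definedness clauses and the two RLC cancellation laws.
The RC law is the first component of the braid relation on the triple
\<open>(x, x \<star> y, (x \<star> y) \<star> (x \<star> z))\<close>. The co-RC law needs no separate proof: on the
opposite quiver, with \<open>\<sigma>\<close> conjugated by the flip, \<open>\<bullet>\<close> becomes \<open>\<star>\<close> and co-RC
becomes RC.\<close>

lemma bij_betw_the_inv_into_eq_iff:
  assumes "bij_betw f S T" "y \<in> T"
  shows "the_inv_into S f y = x \<longleftrightarrow> x \<in> S \<and> f x = y"
  using assms bij_betw_apply[OF bij_betw_the_inv_into] f_the_inv_into_f_bij_betw
    the_inv_into_f_eq[OF bij_betw_imp_inj_on]
  by metis

lemma quiver_YB_map_iff:
  "quiver_YB_map A s t lact ract \<longleftrightarrow>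
     (\<forall>x\<in>A. \<forall>y\<in>A. t x = s y \<longrightarrow>
        lact x y \<in> A \<and> ract x y \<in> A \<and>
        s (lact x y) = s x \<and> t (lact x y) = s (ract x y) \<and> t (ract x y) = t y) \<and>
     (\<forall>x\<in>A. \<forall>y\<in>A. \<forall>z\<in>A. t x = s y \<longrightarrow> t y = s z \<longrightarrow>
        lact (lact x y) (lact (ract x y) z) = lact x (lact y z) \<and>
        ract (lact x y) (lact (ract x y) z) = lact (ract x (lact y z)) (ract y z) \<and>
        ract (ract x y) z = ract (ract x (lact y z)) (ract y z))"
  by (simp add: quiver_YB_map_def sig12_def sig23_def YB_sigma_def)

text \<open>The braid equations of the opposite map on \<open>(x, y, z)\<close> are those of the original
one on \<open>(z, y, x)\<close>, each read from right to left.\<close>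

lemma quiver_YB_map_opposite:
  assumes "quiver_YB_map A s t lact ract"
  shows "quiver_YB_map A t s (\<lambda>x y. ract y x) (\<lambda>x y. lact y x)"
  using assms unfolding quiver_YB_map_iff by metis

lemma YB_involutive_opposite:
  assumes "YB_involutive A s t lact ract"
  shows "YB_involutive A t s (\<lambda>x y. ract y x) (\<lambda>x y. lact y x)"
  using assms by (simp add: YB_involutive_def YB_sigma_def)

lemma YB_nondegenerate_opposite:
  assumes "YB_nondegenerate A s t lact ract"
  shows "YB_nondegenerate A t s (\<lambda>x y. ract y x) (\<lambda>x y. lact y x)"
  using assms by (simp add: YB_nondegenerate_def)

lemma YB_bullet_eq_YB_star_opposite:
  "YB_bullet A s t ract = YB_star A t s (\<lambda>x y. ract y x)"
  by (simp add: fun_eq_iff YB_bullet_def YB_star_def)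

lemma weak_coRC_system_iff_weak_RC_system_opposite:
  "weak_coRC_system Q s t op \<longleftrightarrow> weak_RC_system Q t s op"
  by (simp add: weak_coRC_system_def weak_RC_system_def)

lemma YB_star_eq_Some_iff:
  assumes "YB_nondegenerate A s t lact ract"
  shows "YB_star A s t lact x y = Some c \<longleftrightarrow> x \<in> A \<and> c \<in> A \<and> t x = s c \<and> lact x c = y"
proof (cases "x \<in> A")
  case True
  then have bij: "bij_betw (lact x) {z\<in>A. s z = t x} {z\<in>A. s z = s x}"
    using assms by (simp add: YB_nondegenerate_def)
  show ?thesis
  proof (cases "y \<in> A \<and> s x = s y")
    case True
    then show ?thesis
      using \<open>x \<in> A\<close> bij_betw_the_inv_into_eq_iff[OF bij] by (auto simp: YB_star_def)
  next
    case False
    then show ?thesis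
      using bij_betw_apply[OF bij] by (auto simp: YB_star_def)
  qed
qed (simp add: YB_star_def)

lemma YB_bullet_eq_Some_iff:
  assumes "YB_nondegenerate A s t lact ract"
  shows "YB_bullet A s t ract x y = Some c \<longleftrightarrow> x \<in> A \<and> c \<in> A \<and> t c = s x \<and> ract c x = y"
  using YB_star_eq_Some_iff[OF YB_nondegenerate_opposite[OF assms]]
  by (auto simp: YB_bullet_eq_YB_star_opposite)

locale involutive_nondegenerate_YB_map =
  fixes A :: "'a set" and s t :: "'a \<Rightarrow> 'v" and lact ract :: "'a \<Rightarrow> 'a \<Rightarrow> 'a"
  assumes YB_map: "quiver_YB_map A s t lact ract"
    and involutive: "YB_involutive A s t lact ract"
    and nondegenerate: "YB_nondegenerate A s t lact ract"
begin

lemma opposite: "involutive_nondegenerate_YB_map A t s (\<lambda>x y. ract y x) (\<lambda>x y. lact y x)"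
  using YB_map involutive nondegenerate
  by unfold_locales (auto intro: quiver_YB_map_opposite YB_involutive_opposite YB_nondegenerate_opposite)

lemma closed:
  assumes "x \<in> A" "y \<in> A" "t x = s y"
  shows "lact x y \<in> A" "ract x y \<in> A" "s (lact x y) = s x"
    "t (lact x y) = s (ract x y)" "t (ract x y) = t y"
  using YB_map assms by (simp_all add: quiver_YB_map_def)

lemma involution:
  assumes "x \<in> A" "y \<in> A" "t x = s y"
  shows "lact (lact x y) (ract x y) = x" "ract (lact x y) (ract x y) = y"
  using involutive assms by (simp_all add: YB_involutive_def YB_sigma_def)

lemma braid_lact:
  assumes "x \<in> A" "y \<in> A" "z \<in> A" "t x = s y" "t y = s z"
  shows "lact (lact x y) (lact (ract x y) z) = lact x (lact y z)"
  using YB_map assms by (simp add: quiver_YB_map_iff)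

lemmas star_eq_Some_iff = YB_star_eq_Some_iff[OF nondegenerate]
lemmas bullet_eq_Some_iff = YB_bullet_eq_Some_iff[OF nondegenerate]

lemma star_swap:
  assumes "YB_star A s t lact x y = Some u"
  shows "YB_star A s t lact y x = Some (ract x u)"
  using assms closed[of x u] involution[of x u] by (auto simp: star_eq_Some_iff)

lemma weak_RC_system_star: "weak_RC_system A s t (YB_star A s t lact)"
  unfolding weak_RC_system_def
proof (intro conjI; (intro allI impI)?)
  fix x y u
  assume "YB_star A s t lact x y = Some u"
  then show "x \<in> A \<and> y \<in> A \<and> u \<in> A \<and> s x = s y"
    using closed[of x u] by (auto simp: star_eq_Some_iff)
next
  fix x y u
  assume xy: "YB_star A s t lact x y = Some u"
  show "\<exists>v. YB_star A s t lact y x = Some v \<and> s u = t x \<and> s v = t y \<and> t u = t v"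
    using xy star_swap[OF xy] closed[of x u] by (auto simp: star_eq_Some_iff)
next
  fix x y z a b c
  assume xy: "YB_star A s t lact x y = Some a" and xz: "YB_star A s t lact x z = Some b"
    and ab: "YB_star A s t lact a b = Some c"
  define d e where "d = ract x a" and "e = lact d c"
  have yx: "YB_star A s t lact y x = Some d"
    using star_swap[OF xy] by (simp add: d_def)
  have de: "YB_star A s t lact d e = Some c"
    using xy ab closed[of x a] by (auto simp: star_eq_Some_iff d_def e_def)
  have "lact y e = z"
  proof -
    have "lact y e = lact (lact x a) (lact (ract x a) c)"
      using xy by (simp add: star_eq_Some_iff d_def e_def)
    also have "\<dots> = lact x (lact a c)"
      using xy ab by (intro braid_lact) (auto simp: star_eq_Some_iff)
    also have "\<dots> = z"
      using xz ab by (simp add: star_eq_Some_iff)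
    finally show ?thesis .
  qed
  then have "YB_star A s t lact y z = Some e"
    using xy ab closed[of x a] closed[of d c] by (auto simp: star_eq_Some_iff d_def e_def)
  with yx de show "\<exists>d e. YB_star A s t lact y z = Some e \<and> YB_star A s t lact y x = Some d \<and>
          YB_star A s t lact d e = Some c"
    by blast
qed

lemma weak_coRC_system_bullet: "weak_coRC_system A s t (YB_bullet A s t ract)"
  using involutive_nondegenerate_YB_map.weak_RC_system_star[OF opposite]
  by (simp add: weak_coRC_system_iff_weak_RC_system_opposite YB_bullet_eq_YB_star_opposite)

lemma weak_RLC_system_star_tstar: "weak_RLC_system A s t (YB_star A s t lact) (YB_tstar A s t ract)"
  unfolding weak_RLC_system_def
proof (intro conjI; (intro allI impI)?)
  show "weak_RC_system A s t (YB_star A s t lact)"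
    by (rule weak_RC_system_star)
  show "weak_LC_system A s t (YB_tstar A s t ract)"
    using weak_coRC_system_bullet by (simp add: weak_LC_system_def YB_tstar_def)
next
  fix x y u
  assume xy: "YB_star A s t lact x y = Some u"
  show "\<exists>v. YB_star A s t lact y x = Some v \<and> YB_tstar A s t ract v u = Some x"
    using xy star_swap[OF xy] by (auto simp: star_eq_Some_iff bullet_eq_Some_iff YB_tstar_def)
next
  fix x y u
  assume "YB_tstar A s t ract x y = Some u"
  then show "\<exists>v. YB_tstar A s t ract y x = Some v \<and> YB_star A s t lact v u = Some x"
    using closed[of u y] involution[of u y]
    by (auto simp: star_eq_Some_iff bullet_eq_Some_iff YB_tstar_def)
qed

end

theorem proposition5p3:
  fixes A :: "'a set" and s t :: "'a \<Rightarrow> 'v" and lact ract :: "'a \<Rightarrow> 'a \<Rightarrow> 'a"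
  assumes "quiver_YB_map A s t lact ract"
    and "YB_involutive A s t lact ract"
    and "YB_nondegenerate A s t lact ract"
  shows "weak_RLC_system A s t (YB_star A s t lact) (YB_tstar A s t ract)"
proof -
  interpret involutive_nondegenerate_YB_map A s t lact ract
    using assms by unfold_locales
  show ?thesis
    by (rule weak_RLC_system_star_tstar)
qed

end
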